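(* With $Z,G,B,Y$ and $q_{00}=e^{-(1-q)\mu}$ as below, define $\theta_1=\mathbb E[Y]$, $\theta_2=q_{00}\,\mathbb E[Y\mid Z\le G]/\theta_1$ and $\theta_3=\mathrm{Var}[Y]/\theta_1^2-1/\theta_1$. Then $$\theta_1=\frac{p}{1-p}\,\frac{q}{1-q}\,(1-q_{00}),\qquad \theta_2=-\frac{q_{00}\log q_{00}}{1-q_{00}},\qquad \theta_3=\frac{2}{1-q_{00}}\Big(\frac{1-q}{q}-\theta_2+1\Big)-1.$$
   Context: Let $\mu>0$, $0<q<1$, $0<p<1$. Let $Z\sim\mathrm{Poisson}(\mu)$ and $G$ with $\mathbb P(G=k)=q^k(1-q)$ ($k\in\mathbb N_0$) be independent, $B=\min(Z,G)$, and, conditionally on $B$ (and on $Z,G$), let $Y=\sum_{i=1}^BW_i$ with $W_i$ i.i.d., $\mathbb P(W_i=k)=p^k(1-p)$, $k\in\mathbb N_0$. Here $Y$ models the photons emitted in one exposure by an initially bright Alexa 647 fluorophore, and $\{Z\le G\}$ is the event that it stays bright. *)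

theory Defs
  imports "HOL-Probability.Probability"
begin

text \<open>Joint law of (Z, G, Y): Z ~ Poisson(mu), G with P(G=k) = q^k (1-q) (i.e. geometric_pmf (1-q)),
  independent; B = min Z G; given (Z,G), Y is the sum of B i.i.d. W_i with P(W=k) = p^k (1-p)
  (i.e. geometric_pmf (1-p)).\<close>
definition alexa_joint :: "real \<Rightarrow> real \<Rightarrow> real \<Rightarrow> (nat \<times> nat \<times> nat) pmf" where
  "alexa_joint mu q p =
     bind_pmf (poisson_pmf mu) (\<lambda>z.
     bind_pmf (geometric_pmf (1 - q)) (\<lambda>g.
     map_pmf (\<lambda>ws. (z, g, sum_list ws)) (replicate_pmf (min z g) (geometric_pmf (1 - p)))))"

definition alexa_Y :: "nat \<times> nat \<times> nat \<Rightarrow> real" where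
  "alexa_Y x = real (snd (snd x))"

text \<open>The event Z \<le> G (the fluorophore stays bright).\<close>
definition alexa_bright :: "(nat \<times> nat \<times> nat) set" where
  "alexa_bright = {x. fst x \<le> fst (snd x)}"

end

theory Submission
  imports Defs
begin

text \<open>
  Given B = min Z G, Y is a sum of B independent geometric variables with mean m = p/(1-p) and
  second moment m + 2 m^2, so E[Y | B] = m B and E[Y^2 | B] = m B + m^2 B (B + 1).
  For fixed Z = z, the tail probabilities P(G > k) = q^(k+1) make E[min z G] and
  E[min z G (min z G + 1)] combinations of 1, q^z and z q^z, and P(G \<ge> z) = q^z.
  Averaging over the Poisson variable Z then only needs E[q^Z] = q00 and E[Z q^Z] = mu q q00;
  in particular P(Z \<le> G) = q00 and E[Y; Z \<le> G] = m mu q q00.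
\<close>

lemma nn_integral_pmf_affine:
  fixes M :: "'a pmf" and f g :: "'a \<Rightarrow> real"
  assumes f: "(\<integral>\<^sup>+x. ennreal (f x) \<partial>M) = ennreal a" and g: "(\<integral>\<^sup>+x. ennreal (g x) \<partial>M) = ennreal b"
    and "\<And>x. 0 \<le> f x" "\<And>x. 0 \<le> g x" "0 \<le> a" "0 \<le> b"
    and "\<And>x. 0 \<le> c + d * f x + e * g x"
  shows "(\<integral>\<^sup>+x. ennreal (c + d * f x + e * g x) \<partial>M) = ennreal (c + d * a + e * b)"
proof -
  have "integrable M f" "measure_pmf.expectation M f = a"
    using nn_integral_eq_integrable[of f M a] assms by auto
  moreover have "integrable M g" "measure_pmf.expectation M g = b"
    using nn_integral_eq_integrable[of g M b] assms by auto
  ultimately show ?thesis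
    using assms by (subst nn_integral_eq_integral) auto
qed

lemma nn_integral_pmf_affine1:
  fixes M :: "'a pmf" and f :: "'a \<Rightarrow> real"
  assumes "(\<integral>\<^sup>+x. ennreal (f x) \<partial>M) = ennreal a" "\<And>x. 0 \<le> f x" "0 \<le> a"
    and "\<And>x. 0 \<le> c + d * f x"
  shows "(\<integral>\<^sup>+x. ennreal (c + d * f x) \<partial>M) = ennreal (c + d * a)"
  using nn_integral_pmf_affine[OF assms(1,1,2,2,3,3), of c d 0] assms(4) by simp

lemma nn_integral_nat_pmf_sums:
  fixes P :: "nat pmf"
  assumes "(\<lambda>n. pmf P n * f n) sums s" "\<And>n. 0 \<le> f n"
  shows "(\<integral>\<^sup>+n. ennreal (f n) \<partial>P) = ennreal s"
  using assms
  by (simp add: nn_integral_measure_pmf nn_integral_count_space_nat ennreal_mult'[symmetric]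
                suminf_ennreal_eq sums_unique[symmetric])

lemma expectation_cond_pmf:
  fixes J :: "'a pmf"
  assumes pos: "0 < measure J A" and "\<And>x. 0 \<le> f x" "0 \<le> c"
    and "(\<integral>\<^sup>+x. ennreal (f x * indicator A x) \<partial>J) = ennreal c"
  shows "measure_pmf.expectation (cond_pmf J A) f = c / measure J A"
proof -
  have "set_pmf J \<inter> A \<noteq> {}"
    using pos measure_pmf_zero_iff[of J A] by (auto simp: disjnt_def)
  then have "(\<integral>\<^sup>+x. ennreal (f x) \<partial>cond_pmf J A) = ennreal c / emeasure J A"
    using assms by (simp add: cond_pmf.rep_eq nn_integral_uniform_measure ennreal_indicator ennreal_mult')
  also have "\<dots> = ennreal (c / measure J A)"
    using pos assms by (simp add: measure_pmf.emeasure_eq_measure divide_ennreal)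
  finally show ?thesis
    using nn_integral_eq_integrable[of f "cond_pmf J A"] assms pos by simp
qed

lemma nn_integral_geometric_pmf_unfold:
  fixes q :: real
  assumes "0 \<le> q" "q < 1"
  shows "(\<integral>\<^sup>+g. f g \<partial>geometric_pmf (1 - q)) =
         ennreal (1 - q) * f 0 + ennreal q * (\<integral>\<^sup>+g. f (Suc g) \<partial>geometric_pmf (1 - q))"
  using assms by (subst geometric_bind_pmf_unfold) (auto simp: if_distrib mult.commute)

lemma emeasure_geometric_pmf_atLeast:
  fixes q :: real
  assumes "0 \<le> q" "q < 1"
  shows "emeasure (geometric_pmf (1 - q)) {z..} = ennreal (q ^ z)"
proof (induction z)
  case (Suc z)
  have "emeasure (geometric_pmf (1 - q)) {Suc z..} = (\<integral>\<^sup>+g. indicator {Suc z..} g \<partial>geometric_pmf (1 - q))"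
    by simp
  also have "\<dots> = ennreal q * (\<integral>\<^sup>+g. indicator {z..} g \<partial>geometric_pmf (1 - q))"
    using assms by (subst nn_integral_geometric_pmf_unfold) (simp_all add: indicator_def[abs_def] del: nn_integral_indicator)
  finally show ?case
    using Suc assms by (simp add: ennreal_mult')
qed simp

text \<open>Writing h G = h 0 + \<Sum>k. (h (Suc k) - h k) [G > k] and using P(G > k) = q^(k+1).\<close>

lemma nn_integral_geometric_pmf_tail_sum:
  fixes q :: real and h :: "nat \<Rightarrow> real"
  assumes q: "0 \<le> q" "q < 1" and h: "mono h" "0 \<le> h 0"
    and sums: "(\<lambda>k. (h (Suc k) - h k) * q ^ Suc k) sums s"
  shows "(\<integral>\<^sup>+g. ennreal (h g) \<partial>geometric_pmf (1 - q)) = ennreal (h 0 + s)"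
proof -
  define d where "d k = h (Suc k) - h k" for k
  have d_nonneg: "0 \<le> d k" for k
    using h by (simp add: d_def monoD)
  have h_tail_sum: "ennreal (h g) = ennreal (h 0) + (\<Sum>k. ennreal (d k) * indicator {Suc k..} g)" for g
  proof -
    have "(\<Sum>k. ennreal (d k) * indicator {Suc k..} g) = (\<Sum>k<g. ennreal (d k))"
      by (subst suminf_finite[of "{..<g}"]) (auto simp: indicator_def intro!: sum.cong)
    also have "\<dots> = ennreal (h g - h 0)"
      using d_nonneg by (simp add: d_def sum_lessThan_telescope)
    finally show ?thesis
      using h by (simp add: ennreal_plus[symmetric] monoD)
  qed
  have s_nonneg: "0 \<le> s"
    using sums_le[OF _ sums_zero sums] d_nonneg q by (simp add: d_def)
  have "(\<integral>\<^sup>+g. ennreal (h g) \<partial>geometric_pmf (1 - q)) =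
        ennreal (h 0) + (\<integral>\<^sup>+g. (\<Sum>k. ennreal (d k) * indicator {Suc k..} g) \<partial>geometric_pmf (1 - q))"
    by (simp only: nn_integral_cong[OF h_tail_sum])
       (simp add: nn_integral_add measure_pmf.emeasure_space_1)
  also have "\<dots> = ennreal (h 0) + (\<Sum>k. ennreal (d k) * emeasure (geometric_pmf (1 - q)) {Suc k..})"
    by (simp add: nn_integral_suminf nn_integral_cmult_indicator)
  also have "\<dots> = ennreal (h 0) + ennreal s"
    using sums d_nonneg q
    by (simp add: emeasure_geometric_pmf_atLeast ennreal_mult'[symmetric] suminf_ennreal_eq d_def
                  sums_unique[symmetric])
  finally show ?thesis
    using s_nonneg h by (simp add: ennreal_plus)
qed

lemma nn_integral_geometric_pmf_real:
  fixes q :: real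
  assumes "0 \<le> q" "q < 1"
  shows "(\<integral>\<^sup>+g. ennreal (real g) \<partial>geometric_pmf (1 - q)) = ennreal (q / (1 - q))"
proof -
  have "(\<lambda>k. q * q ^ k) sums (q * (1 / (1 - q)))"
    using assms by (intro sums_mult geometric_sums) auto
  then show ?thesis
    using assms by (subst nn_integral_geometric_pmf_tail_sum) (auto simp: mono_def)
qed

lemma nn_integral_geometric_pmf_real_squared:
  fixes q :: real
  assumes "0 \<le> q" "q < 1"
  shows "(\<integral>\<^sup>+g. ennreal (real g ^ 2) \<partial>geometric_pmf (1 - q)) =
         ennreal (q / (1 - q) + 2 * (q / (1 - q)) ^ 2)"
proof -
  have "(\<lambda>k. 2 * q * (q ^ k * real k) + q * q ^ k) sums (2 * q * (q / (1 - q)\<^sup>2) + q * (1 / (1 - q)))"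
    using assms by (intro sums_add sums_mult geometric_sums geometric_sums_times_n) auto
  then have "(\<lambda>k. (real (Suc k) ^ 2 - real k ^ 2) * q ^ Suc k) sums (q / (1 - q) + 2 * (q / (1 - q)) ^ 2)"
    by (simp add: power_divide power2_eq_square algebra_simps)
  moreover have "mono (\<lambda>g. real g ^ 2)"
    by (auto intro!: monoI power_mono)
  ultimately show ?thesis
    using nn_integral_geometric_pmf_tail_sum[OF assms, of "\<lambda>g. real g ^ 2"] by simp
qed

lemma sum_power_Suc:
  fixes q :: real
  assumes "q \<noteq> 1"
  shows "(\<Sum>k<z. q ^ Suc k) = q / (1 - q) * (1 - q ^ z)"
  using assms by (simp add: sum_distrib_left[symmetric] sum_gp_strict)

lemma sum_Suc_times_power_Suc:
  fixes q :: real
  assumes "q \<noteq> 1"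
  shows "(\<Sum>k<z. real (Suc k) * q ^ Suc k) = q / (1 - q)\<^sup>2 * (1 - q ^ z - (1 - q) * z * q ^ z)"
proof -
  have "(1 - q)\<^sup>2 * (\<Sum>k<z. real (Suc k) * q ^ Suc k) = q * (1 - q ^ z - (1 - q) * z * q ^ z)"
  proof (induction z)
    case (Suc z)
    have "(1 - q)\<^sup>2 * (\<Sum>k<Suc z. real (Suc k) * q ^ Suc k) =
          (1 - q)\<^sup>2 * (\<Sum>k<z. real (Suc k) * q ^ Suc k) + (1 - q)\<^sup>2 * (real (Suc z) * q ^ Suc z)"
      by (simp add: algebra_simps)
    then show ?case
      using Suc by (simp add: algebra_simps power2_eq_square)
  qed simp
  then show ?thesis
    using assms by (simp add: field_simps)
qed

lemma nn_integral_geometric_pmf_min: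
  fixes q :: real
  assumes "0 \<le> q" "q < 1"
  shows "(\<integral>\<^sup>+g. ennreal (real (min z g)) \<partial>geometric_pmf (1 - q)) = ennreal (q / (1 - q) * (1 - q ^ z))"
proof -
  let ?h = "\<lambda>g. real (min z g)"
  have "(\<lambda>k. (?h (Suc k) - ?h k) * q ^ Suc k) sums (\<Sum>k<z. (?h (Suc k) - ?h k) * q ^ Suc k)"
    by (rule sums_finite) auto
  moreover have "(\<Sum>k<z. (?h (Suc k) - ?h k) * q ^ Suc k) = (\<Sum>k<z. q ^ Suc k)"
    by (intro sum.cong) auto
  moreover have "mono ?h"
    by (auto intro!: monoI)
  ultimately show ?thesis
    using nn_integral_geometric_pmf_tail_sum[OF assms, of ?h] assms
    by (simp add: sum_power_Suc del: power_Suc)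
qed

lemma nn_integral_geometric_pmf_min_times_Suc:
  fixes q :: real
  assumes "0 \<le> q" "q < 1"
  shows "(\<integral>\<^sup>+g. ennreal (real (min z g) * (real (min z g) + 1)) \<partial>geometric_pmf (1 - q)) =
         ennreal (2 * q / (1 - q)\<^sup>2 * (1 - q ^ z - (1 - q) * z * q ^ z))"
proof -
  let ?h = "\<lambda>g. real (min z g) * (real (min z g) + 1)"
  have "(\<lambda>k. (?h (Suc k) - ?h k) * q ^ Suc k) sums (\<Sum>k<z. (?h (Suc k) - ?h k) * q ^ Suc k)"
    by (rule sums_finite) auto
  moreover have "(\<Sum>k<z. (?h (Suc k) - ?h k) * q ^ Suc k) = 2 * (\<Sum>k<z. real (Suc k) * q ^ Suc k)"
    unfolding sum_distrib_left by (intro sum.cong) (auto simp: algebra_simps)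
  moreover have "mono ?h"
    by (auto intro!: monoI mult_mono)
  ultimately show ?thesis
    using nn_integral_geometric_pmf_tail_sum[OF assms, of ?h] assms
    by (simp add: sum_Suc_times_power_Suc mult.assoc del: power_Suc of_nat_Suc)
qed

lemma sums_of_nat_times_power_div_fact: "(\<lambda>n. real n * x ^ n / fact n) sums (x * exp x)"
proof -
  have "(\<lambda>n. x ^ n / fact n * x) sums (exp x * x)"
    using exp_converges[of x] by (intro sums_mult2) (simp add: divide_inverse mult.commute)
  moreover have "(\<lambda>n. real (Suc n) * x ^ Suc n / fact (Suc n)) = (\<lambda>n. x ^ n / fact n * x)"
    by (rule ext) (simp add: field_simps del: of_nat_Suc)
  ultimately have "(\<lambda>n. real (Suc n) * x ^ Suc n / fact (Suc n)) sums (exp x * x + 0)"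
    by simp
  then show ?thesis
    by (subst (asm) sums_Suc_iff) (simp add: mult.commute)
qed

lemma nn_integral_poisson_pmf_power:
  fixes q mu :: real
  assumes "0 \<le> q" "0 < mu"
  shows "(\<integral>\<^sup>+z. ennreal (q ^ z) \<partial>poisson_pmf mu) = ennreal (exp (- (1 - q) * mu))"
proof (rule nn_integral_nat_pmf_sums)
  have "(\<lambda>n. exp (- mu) * ((mu * q) ^ n / fact n)) sums (exp (- mu) * exp (mu * q))"
    using exp_converges[of "mu * q"] by (intro sums_mult) (simp add: divide_inverse mult.commute)
  then show "(\<lambda>n. pmf (poisson_pmf mu) n * q ^ n) sums exp (- (1 - q) * mu)"
    using assms by (simp add: power_mult_distrib mult_exp_exp algebra_simps)
qed (use assms in auto)

lemma nn_integral_poisson_pmf_times_power: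
  fixes q mu :: real
  assumes "0 \<le> q" "0 < mu"
  shows "(\<integral>\<^sup>+z. ennreal (real z * q ^ z) \<partial>poisson_pmf mu) = ennreal (mu * q * exp (- (1 - q) * mu))"
proof (rule nn_integral_nat_pmf_sums)
  have "(\<lambda>n. exp (- mu) * (real n * (mu * q) ^ n / fact n)) sums (exp (- mu) * (mu * q * exp (mu * q)))"
    using sums_of_nat_times_power_div_fact by (intro sums_mult)
  then show "(\<lambda>n. pmf (poisson_pmf mu) n * (real n * q ^ n)) sums (mu * q * exp (- (1 - q) * mu))"
    using assms by (simp add: power_mult_distrib mult_exp_exp algebra_simps)
qed (use assms in auto)

lemma nn_integral_sum_list_replicate_pmf:
  fixes N :: "nat pmf"
  assumes N: "(\<integral>\<^sup>+x. ennreal (real x) \<partial>N) = ennreal a" and "0 \<le> a"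
  shows "(\<integral>\<^sup>+xs. ennreal (real (sum_list xs)) \<partial>replicate_pmf n N) = ennreal (real n * a)"
proof (induction n)
  case (Suc n)
  have "(\<integral>\<^sup>+xs. ennreal (real (sum_list xs)) \<partial>replicate_pmf (Suc n) N) =
        (\<integral>\<^sup>+x. \<integral>\<^sup>+xs. ennreal (real x + 1 * real (sum_list xs)) \<partial>replicate_pmf n N \<partial>N)"
    by (simp add: nn_integral_bind_pmf)
  also have "\<dots> = (\<integral>\<^sup>+x. ennreal (real n * a + 1 * real x) \<partial>N)"
    using assms by (intro nn_integral_cong, subst nn_integral_pmf_affine1[OF Suc]) (auto simp: add.commute)
  also have "\<dots> = ennreal (real (Suc n) * a)"
    using assms by (subst nn_integral_pmf_affine1[OF N]) (auto simp: algebra_simps)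
  finally show ?case .
qed simp

lemma nn_integral_sum_list_squared_replicate_pmf:
  fixes N :: "nat pmf"
  assumes N1: "(\<integral>\<^sup>+x. ennreal (real x) \<partial>N) = ennreal a"
    and N2: "(\<integral>\<^sup>+x. ennreal (real x ^ 2) \<partial>N) = ennreal b" and "0 \<le> a" "0 \<le> b"
  shows "(\<integral>\<^sup>+xs. ennreal (real (sum_list xs) ^ 2) \<partial>replicate_pmf n N) =
         ennreal (real n * b + real n * (real n - 1) * a ^ 2)"
proof (induction n)
  case (Suc n)
  have n_nonneg: "0 \<le> real n * (real n - 1)"
    by (cases n) auto
  let ?c = "real n * b + real n * (real n - 1) * a ^ 2"
  have c_nonneg: "0 \<le> ?c"
    using n_nonneg assms by simp
  have "(\<integral>\<^sup>+xs. ennreal (real (sum_list xs) ^ 2) \<partial>replicate_pmf (Suc n) N) =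
        (\<integral>\<^sup>+x. \<integral>\<^sup>+xs. ennreal (real x ^ 2 + 2 * real x * real (sum_list xs) + 1 * real (sum_list xs) ^ 2)
           \<partial>replicate_pmf n N \<partial>N)"
    by (simp add: nn_integral_bind_pmf power2_sum add_ac)
  also have "\<dots> = (\<integral>\<^sup>+x. ennreal (?c + 2 * real n * a * real x + 1 * real x ^ 2) \<partial>N)"
    using assms c_nonneg
    by (intro nn_integral_cong,
        subst nn_integral_pmf_affine[OF nn_integral_sum_list_replicate_pmf[OF N1] Suc])
       (auto simp: algebra_simps)
  also have "\<dots> = ennreal (?c + 2 * real n * a * a + 1 * b)"
    using assms c_nonneg by (intro nn_integral_pmf_affine[OF N1 N2]) auto
  also have "\<dots> = ennreal (real (Suc n) * b + real (Suc n) * (real (Suc n) - 1) * a ^ 2)"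
    by (rule arg_cong[where f = ennreal]) (simp add: algebra_simps power2_eq_square)
  finally show ?case .
qed simp

lemma nn_integral_sum_list_replicate_geometric_pmf:
  fixes p :: real
  assumes "0 \<le> p" "p < 1"
  shows "(\<integral>\<^sup>+ws. ennreal (real (sum_list ws)) \<partial>replicate_pmf n (geometric_pmf (1 - p))) =
         ennreal (p / (1 - p) * real n)"
  using nn_integral_sum_list_replicate_pmf[OF nn_integral_geometric_pmf_real[OF assms]] assms
  by (simp add: mult.commute)

lemma nn_integral_sum_list_squared_replicate_geometric_pmf:
  fixes p :: real
  assumes "0 \<le> p" "p < 1"
  shows "(\<integral>\<^sup>+ws. ennreal (real (sum_list ws) ^ 2) \<partial>replicate_pmf n (geometric_pmf (1 - p))) =
         ennreal (p / (1 - p) * real n + (p / (1 - p))\<^sup>2 * (real n * (real n + 1)))"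
proof -
  let ?m = "p / (1 - p)"
  have ident: "real n * (m + 2 * m ^ 2) + real n * (real n - 1) * m ^ 2 = m * real n + m\<^sup>2 * (real n * (real n + 1))"
    for m :: real
    by (simp add: algebra_simps power2_eq_square)
  have "(\<integral>\<^sup>+ws. ennreal (real (sum_list ws) ^ 2) \<partial>replicate_pmf n (geometric_pmf (1 - p))) =
        ennreal (real n * (?m + 2 * ?m ^ 2) + real n * (real n - 1) * ?m ^ 2)"
    using assms
    by (intro nn_integral_sum_list_squared_replicate_pmf nn_integral_geometric_pmf_real
              nn_integral_geometric_pmf_real_squared) auto
  then show ?thesis
    by (simp only: ident)
qed

lemma exp_neg_times_one_plus_le_one:
  fixes x t :: real
  assumes "0 \<le> x" "t \<le> 1"
  shows "exp (- x) * (1 + t * x) \<le> 1"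
proof -
  have "1 + t * x \<le> exp x"
    using assms mult_right_mono[OF assms(2,1)] exp_ge_add_one_self[of x] by linarith
  then show ?thesis
    by (simp add: exp_minus field_simps)
qed

lemma alexa_Y_nonneg: "0 \<le> alexa_Y x"
  by (simp add: alexa_Y_def)

lemma indicator_alexa_bright: "indicator alexa_bright (z, g, s) = indicator {z..} g"
  by (simp add: alexa_bright_def indicator_def)

lemma prob_alexa_bright:
  fixes mu q p :: real
  assumes "0 < mu" "0 \<le> q" "q < 1"
  shows "measure (alexa_joint mu q p) alexa_bright = exp (- (1 - q) * mu)"
proof -
  have "emeasure (alexa_joint mu q p) alexa_bright = (\<integral>\<^sup>+x. indicator alexa_bright x \<partial>alexa_joint mu q p)"
    by (rule nn_integral_indicator[symmetric]) simp
  also have "\<dots> = (\<integral>\<^sup>+z. \<integral>\<^sup>+g. indicator {z..} g \<partial>geometric_pmf (1 - q) \<partial>poisson_pmf mu)"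
    by (simp add: alexa_joint_def nn_integral_bind_pmf indicator_alexa_bright del: nn_integral_indicator)
  also have "\<dots> = ennreal (exp (- (1 - q) * mu))"
    using assms by (simp add: emeasure_geometric_pmf_atLeast nn_integral_poisson_pmf_power)
  finally show ?thesis
    by (simp add: measure_pmf.emeasure_eq_measure)
qed

lemma expectation_alexa_Y:
  fixes mu q p :: real
  assumes mu: "0 < mu" and q: "0 \<le> q" "q < 1" and p: "0 \<le> p" "p < 1"
  shows "integrable (alexa_joint mu q p) alexa_Y"
    and "measure_pmf.expectation (alexa_joint mu q p) alexa_Y =
         p / (1 - p) * (q / (1 - q)) * (1 - exp (- (1 - q) * mu))"
proof -
  define m where "m = p / (1 - p)"
  define A where "A = q / (1 - q)"
  have m: "0 \<le> m" and A: "0 \<le> A"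
    using p q by (auto simp: m_def A_def)
  have "(\<integral>\<^sup>+x. ennreal (alexa_Y x) \<partial>alexa_joint mu q p) =
        (\<integral>\<^sup>+z. \<integral>\<^sup>+g. ennreal (0 + m * real (min z g)) \<partial>geometric_pmf (1 - q) \<partial>poisson_pmf mu)"
    using p by (simp add: alexa_joint_def alexa_Y_def nn_integral_bind_pmf m_def
                          nn_integral_sum_list_replicate_geometric_pmf)
  also have "\<dots> = (\<integral>\<^sup>+z. ennreal (0 + m * (A * (1 - q ^ z))) \<partial>poisson_pmf mu)"
    using m A q unfolding A_def
    by (intro nn_integral_cong nn_integral_pmf_affine1 nn_integral_geometric_pmf_min)
       (auto simp: power_le_one)
  also have "\<dots> = (\<integral>\<^sup>+z. ennreal (m * A + - (m * A) * q ^ z) \<partial>poisson_pmf mu)"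
    by (simp add: algebra_simps)
  also have "\<dots> = ennreal (m * A + - (m * A) * exp (- (1 - q) * mu))"
    using m A q mu
    by (intro nn_integral_pmf_affine1 nn_integral_poisson_pmf_power)
       (auto intro!: mult_left_le power_le_one)
  also have "m * A + - (m * A) * exp (- (1 - q) * mu) = m * A * (1 - exp (- (1 - q) * mu))"
    by (simp add: algebra_simps)
  finally have nn_integral: "(\<integral>\<^sup>+x. ennreal (alexa_Y x) \<partial>alexa_joint mu q p) =
                            ennreal (m * A * (1 - exp (- (1 - q) * mu)))" .
  have "exp (- (1 - q) * mu) \<le> 1"
    using q mu by (simp add: mult_nonpos_nonneg)
  then have "0 \<le> m * A * (1 - exp (- (1 - q) * mu))"
    using m A by simp
  with nn_integral show "integrable (alexa_joint mu q p) alexa_Y"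
    and "measure_pmf.expectation (alexa_joint mu q p) alexa_Y = p / (1 - p) * (q / (1 - q)) * (1 - exp (- (1 - q) * mu))"
    using nn_integral_eq_integrable[of alexa_Y] alexa_Y_nonneg by (simp_all add: m_def A_def)
qed

lemma expectation_alexa_Y_squared:
  fixes mu q p :: real
  assumes mu: "0 < mu" and q: "0 \<le> q" "q < 1" and p: "0 \<le> p" "p < 1"
  defines "e \<equiv> exp (- (1 - q) * mu)"
  shows "integrable (alexa_joint mu q p) (\<lambda>x. alexa_Y x ^ 2)"
    and "measure_pmf.expectation (alexa_joint mu q p) (\<lambda>x. alexa_Y x ^ 2) =
         p / (1 - p) * (q / (1 - q)) * (1 - e) +
         (p / (1 - p))\<^sup>2 * (2 * q / (1 - q)\<^sup>2) * (1 - e - (1 - q) * mu * q * e)"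
proof -
  define m where "m = p / (1 - p)"
  define A where "A = q / (1 - q)"
  define K where "K = 2 * q / (1 - q)\<^sup>2"
  have m: "0 \<le> m" and A: "0 \<le> A"
    using p q by (auto simp: m_def A_def)
  have A_term: "0 \<le> A * (1 - q ^ z)" for z :: nat
    using A q by (simp add: power_le_one)
  have K_term: "0 \<le> K * (1 - q ^ z - (1 - q) * z * q ^ z)" for z :: nat
  proof -
    have "K * (1 - q ^ z - (1 - q) * z * q ^ z) = 2 * (\<Sum>k<z. real (Suc k) * q ^ Suc k)"
      using q by (simp add: K_def sum_Suc_times_power_Suc del: power_Suc of_nat_Suc)
    then show ?thesis
      using q by (simp add: sum_nonneg del: power_Suc of_nat_Suc)
  qed
  have "(\<integral>\<^sup>+x. ennreal (alexa_Y x ^ 2) \<partial>alexa_joint mu q p) =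
        (\<integral>\<^sup>+z. \<integral>\<^sup>+g. ennreal (0 + m * real (min z g) + m\<^sup>2 * (real (min z g) * (real (min z g) + 1)))
           \<partial>geometric_pmf (1 - q) \<partial>poisson_pmf mu)"
    using p by (simp add: alexa_joint_def alexa_Y_def nn_integral_bind_pmf m_def
                          nn_integral_sum_list_squared_replicate_geometric_pmf)
  also have "\<dots> = (\<integral>\<^sup>+z. ennreal (0 + m * (A * (1 - q ^ z)) + m\<^sup>2 * (K * (1 - q ^ z - (1 - q) * z * q ^ z)))
                   \<partial>poisson_pmf mu)"
    using m A_term K_term q unfolding A_def K_def
    by (intro nn_integral_cong nn_integral_pmf_affine nn_integral_geometric_pmf_min
              nn_integral_geometric_pmf_min_times_Suc) auto
  also have "\<dots> = (\<integral>\<^sup>+z. ennreal ((m * A + m\<^sup>2 * K) + - (m * A + m\<^sup>2 * K) * q ^ z +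
                                   - (m\<^sup>2 * K * (1 - q)) * (real z * q ^ z)) \<partial>poisson_pmf mu)"
    by (simp add: algebra_simps)
  also have "\<dots> = ennreal ((m * A + m\<^sup>2 * K) + - (m * A + m\<^sup>2 * K) * e +
                           - (m\<^sup>2 * K * (1 - q)) * (mu * q * e))"
  proof (unfold e_def, intro nn_integral_pmf_affine nn_integral_poisson_pmf_power
                              nn_integral_poisson_pmf_times_power)
    fix z :: nat
    have "0 \<le> m * (A * (1 - q ^ z)) + m\<^sup>2 * (K * (1 - q ^ z - (1 - q) * z * q ^ z))"
      using m A_term K_term by simp
    then show "0 \<le> (m * A + m\<^sup>2 * K) + - (m * A + m\<^sup>2 * K) * q ^ z + - (m\<^sup>2 * K * (1 - q)) * (real z * q ^ z)"
      by (simp add: algebra_simps)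
  qed (use q mu in auto)
  also have "(m * A + m\<^sup>2 * K) + - (m * A + m\<^sup>2 * K) * e + - (m\<^sup>2 * K * (1 - q)) * (mu * q * e) =
             m * A * (1 - e) + m\<^sup>2 * K * (1 - e - (1 - q) * mu * q * e)"
    by (simp add: algebra_simps)
  finally have nn_integral: "(\<integral>\<^sup>+x. ennreal (alexa_Y x ^ 2) \<partial>alexa_joint mu q p) =
                ennreal (m * A * (1 - e) + m\<^sup>2 * K * (1 - e - (1 - q) * mu * q * e))" .
  have "0 \<le> 1 - e - (1 - q) * mu * q * e"
    using exp_neg_times_one_plus_le_one[of "(1 - q) * mu" q] q mu by (simp add: e_def algebra_simps)
  moreover have "e \<le> 1" "0 \<le> K"
    using q mu by (simp_all add: e_def K_def mult_nonpos_nonneg)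
  ultimately have "0 \<le> m * A * (1 - e) + m\<^sup>2 * K * (1 - e - (1 - q) * mu * q * e)"
    using m A by simp
  with nn_integral show "integrable (alexa_joint mu q p) (\<lambda>x. alexa_Y x ^ 2)"
    and "measure_pmf.expectation (alexa_joint mu q p) (\<lambda>x. alexa_Y x ^ 2) =
         p / (1 - p) * (q / (1 - q)) * (1 - e) +
         (p / (1 - p))\<^sup>2 * (2 * q / (1 - q)\<^sup>2) * (1 - e - (1 - q) * mu * q * e)"
    using nn_integral_eq_integrable[of "\<lambda>x. alexa_Y x ^ 2"] alexa_Y_nonneg
    by (simp_all add: m_def A_def K_def)
qed

lemma nn_integral_alexa_Y_bright:
  fixes mu q p :: real
  assumes mu: "0 < mu" and q: "0 \<le> q" "q < 1" and p: "0 \<le> p" "p < 1"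
  shows "(\<integral>\<^sup>+x. ennreal (alexa_Y x * indicator alexa_bright x) \<partial>alexa_joint mu q p) =
         ennreal (p / (1 - p) * (mu * q * exp (- (1 - q) * mu)))"
proof -
  define m where "m = p / (1 - p)"
  have m: "0 \<le> m"
    using p by (simp add: m_def)
  have conditioned: "(\<integral>\<^sup>+ws. ennreal (real (sum_list ws) * indicator alexa_bright (z, g, sum_list ws))
                       \<partial>replicate_pmf (min z g) (geometric_pmf (1 - p))) =
                     ennreal (m * real z) * indicator {z..} g" for z g :: nat
    using p by (cases "z \<le> g") (simp_all add: indicator_alexa_bright
                                     nn_integral_sum_list_replicate_geometric_pmf m_def)
  have "(\<integral>\<^sup>+x. ennreal (alexa_Y x * indicator alexa_bright x) \<partial>alexa_joint mu q p) =
        (\<integral>\<^sup>+z. ennreal (m * real z) * emeasure (geometric_pmf (1 - q)) {z..} \<partial>poisson_pmf mu)"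
    by (simp add: alexa_joint_def alexa_Y_def nn_integral_bind_pmf conditioned
                  nn_integral_cmult_indicator del: nn_integral_indicator)
  also have "\<dots> = (\<integral>\<^sup>+z. ennreal (0 + m * (real z * q ^ z)) \<partial>poisson_pmf mu)"
    using m q by (simp add: emeasure_geometric_pmf_atLeast ennreal_mult'[symmetric] mult.assoc)
  also have "\<dots> = ennreal (0 + m * (mu * q * exp (- (1 - q) * mu)))"
    using m q mu by (intro nn_integral_pmf_affine1 nn_integral_poisson_pmf_times_power) auto
  finally show ?thesis
    by (simp add: m_def)
qed

lemma expectation_alexa_Y_cond_bright:
  fixes mu q p :: real
  assumes "0 < mu" "0 \<le> q" "q < 1" "0 \<le> p" "p < 1"
  shows "measure_pmf.expectation (cond_pmf (alexa_joint mu q p) alexa_bright) alexa_Y = p / (1 - p) * mu * q"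
proof -
  have "measure_pmf.expectation (cond_pmf (alexa_joint mu q p) alexa_bright) alexa_Y =
        p / (1 - p) * (mu * q * exp (- (1 - q) * mu)) / measure (alexa_joint mu q p) alexa_bright"
    using assms by (intro expectation_cond_pmf nn_integral_alexa_Y_bright) (auto simp: prob_alexa_bright alexa_Y_nonneg)
  then show ?thesis
    using assms by (simp add: prob_alexa_bright)
qed

text \<open>Here t is \<theta>1 and t + m^2 (\<dots>) is E[Y^2], so the left-hand side is \<theta>3.\<close>

lemma excess_dispersion_identity:
  fixes m q e x :: real
  assumes "0 < m" "0 < q" "q < 1" "0 < e" "e < 1"
  defines "t \<equiv> m * (q / (1 - q)) * (1 - e)"
  shows "(t + m\<^sup>2 * (2 * q / (1 - q)\<^sup>2) * (1 - e - x * q * e) - t\<^sup>2) / t\<^sup>2 - 1 / t =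
         2 / (1 - e) * ((1 - q) / q - e * x / (1 - e) + 1) - 1"
proof -
  have t: "t \<noteq> 0"
    using assms by (simp add: t_def)
  have split: "(t + R - t\<^sup>2) / t\<^sup>2 - 1 / t = R / t\<^sup>2 - 1" for R
    using t by (simp add: field_simps power2_eq_square)
  have t_squared: "t\<^sup>2 = m\<^sup>2 * q\<^sup>2 * (1 - e)\<^sup>2 / (1 - q)\<^sup>2"
    by (simp add: t_def power_mult_distrib power_divide)
  have cancel: "m\<^sup>2 * (2 * q / c) * W / (m\<^sup>2 * q\<^sup>2 * d / c) = 2 * W / (q * d)" if "c \<noteq> 0" "d \<noteq> 0" for c d W
    using that assms by (simp add: field_simps power2_eq_square)
  have "m\<^sup>2 * (2 * q / (1 - q)\<^sup>2) * (1 - e - x * q * e) / t\<^sup>2 = 2 * (1 - e - x * q * e) / (q * (1 - e)\<^sup>2)"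
    unfolding t_squared by (rule cancel) (use assms in auto)
  also have "\<dots> = 2 / (1 - e) * ((1 - q) / q - e * x / (1 - e) + 1)"
    using assms by (simp add: field_simps power2_eq_square)
  finally show ?thesis
    by (simp add: split)
qed

theorem mainTheorem11:
  fixes mu q p :: real
  assumes "0 < mu" and "0 < q" and "q < 1" and "0 < p" and "p < 1"
  defines "J \<equiv> alexa_joint mu q p"
      and "q00 \<equiv> exp (- (1 - q) * mu)"
  defines "\<theta>1 \<equiv> measure_pmf.expectation J alexa_Y"
  defines "\<theta>2 \<equiv> q00 * measure_pmf.expectation (cond_pmf J alexa_bright) alexa_Y / \<theta>1"
      and "\<theta>3 \<equiv> measure_pmf.variance J alexa_Y / \<theta>1 ^ 2 - 1 / \<theta>1"
  shows "\<theta>1 = p / (1 - p) * (q / (1 - q)) * (1 - q00) \<and>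
         \<theta>2 = - (q00 * ln q00) / (1 - q00) \<and>
         \<theta>3 = 2 / (1 - q00) * ((1 - q) / q - \<theta>2 + 1) - 1"
proof -
  note params = assms(1-5)
  have "0 < (1 - q) * mu"
    using params by simp
  then have q00: "0 < q00" "q00 < 1" and ln_q00: "ln q00 = - ((1 - q) * mu)"
    by (simp_all add: q00_def algebra_simps)
  have \<theta>1: "\<theta>1 = p / (1 - p) * (q / (1 - q)) * (1 - q00)"
    using expectation_alexa_Y[of mu q p] params by (simp add: \<theta>1_def J_def q00_def)
  have variance: "measure_pmf.variance J alexa_Y =
        \<theta>1 + (p / (1 - p))\<^sup>2 * (2 * q / (1 - q)\<^sup>2) * (1 - q00 - (1 - q) * mu * q * q00) - \<theta>1\<^sup>2"
    using expectation_alexa_Y[of mu q p] expectation_alexa_Y_squared[of mu q p] params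
    by (subst measure_pmf.variance_eq) (simp_all add: \<theta>1 J_def q00_def \<theta>1_def)
  have \<theta>3: "\<theta>3 = 2 / (1 - q00) * ((1 - q) / q - q00 * ((1 - q) * mu) / (1 - q00) + 1) - 1"
    unfolding \<theta>3_def variance \<theta>1 by (rule excess_dispersion_identity) (use q00 params in auto)
  have cond_mean: "measure_pmf.expectation (cond_pmf J alexa_bright) alexa_Y = p / (1 - p) * mu * q"
    unfolding J_def using params by (intro expectation_alexa_Y_cond_bright) auto
  have "q00 * (m * mu * q) / (m * (q / (1 - q)) * (1 - q00)) = q00 * ((1 - q) * mu) / (1 - q00)"
    if "m \<noteq> 0" for m
    using that q00 params by (simp add: field_simps)
  then have \<theta>2: "\<theta>2 = q00 * ((1 - q) * mu) / (1 - q00)"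
    unfolding \<theta>2_def \<theta>1 cond_mean using params by simp
  show ?thesis
    using \<theta>1 \<theta>2 \<theta>3 ln_q00 by simp
qed

end
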